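(* Let $d\ge 1$ and $k\ge d+2$ be integers. Let $\mu_1,\dots,\mu_k\in\mathbb{R}^d$ and let \[\rho(x)=\sum_{i=1}^k \frac{1}{k\sqrt{(2\pi)^d}}\,e^{-\frac12\|x-\mu_i\|^2},\qquad x\in\mathbb{R}^d,\] be the mixture of $k$ equally weighted normal distributions with identity covariance and means $\mu_1,\dots,\mu_k$. Assume that the point configuration $(\mu_1,\dots,\mu_k)$ is reconstructible from its multiset of pairwise distances. Then $\rho$ is uniquely reconstructible, up to a rigid motion, from its distribution of distances: if $\nu_1,\dots,\nu_k\in\mathbb{R}^d$ and $\bar\rho(x)=\sum_{i=1}^k \frac{1}{k\sqrt{(2\pi)^d}}e^{-\frac12\|x-\nu_i\|^2}$ has the same distribution of distances as $\rho$, then there exists $g\in E(d)$ with $\rho(x)=\bar\rho(g\cdot x)$ for all $x\in\mathbb{R}^d$.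
   Context: $E(d)$ denotes the Euclidean group of rigid motions of $\mathbb{R}^d$ and $\|\cdot\|$ the Euclidean norm. For a probability density $\rho$ on $\mathbb{R}^d$, its distribution of distances is the probability density $r(\Delta)$ of the random variable $\Delta=\|x_1-x_2\|^2$, where $x_1,x_2$ are drawn independently according to $\rho$. A point configuration $p_1,\dots,p_k\in\mathbb{R}^d$ is called reconstructible from its multiset of pairwise distances if for every configuration $q_1,\dots,q_k\in\mathbb{R}^d$ whose multiset of pairwise distances $\{\|q_i-q_j\|: i<j\}$ equals that of $p_1,\dots,p_k$, there exist $g\in E(d)$ and a permutation $\pi$ of $\{1,\dots,k\}$ with $g\cdot p_{\pi(i)}=q_i$ for all $i$. *)

theory Defs
  imports "HOL-Probability.Probability" "HOL-Combinatorics.Permutations" "HOL-Library.Multiset"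
begin

definition rigid_motion :: "(real^'n \<Rightarrow> real^'n) \<Rightarrow> bool" where
  "rigid_motion g \<longleftrightarrow>
     (\<exists>A b. orthogonal_transformation A \<and> (\<forall>x. g x = A x + b))"

definition pair_dists :: "nat \<Rightarrow> (nat \<Rightarrow> real^'n) \<Rightarrow> real multiset" where
  "pair_dists k p =
     image_mset (\<lambda>(i,j). dist (p i) (p j)) (mset_set {(i,j). i < j \<and> j < k})"

definition reconstructible :: "nat \<Rightarrow> (nat \<Rightarrow> real^'n) \<Rightarrow> bool" where
  "reconstructible k p \<longleftrightarrow>
     (\<forall>q :: nat \<Rightarrow> real^'n. pair_dists k q = pair_dists k p \<longrightarrow>
        (\<exists>g \<pi>. rigid_motion g \<and> \<pi> permutes {..<k} \<and> (\<forall>i<k. g (p (\<pi> i)) = q i)))"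

definition gauss_mixture :: "nat \<Rightarrow> (nat \<Rightarrow> real^'n) \<Rightarrow> real^'n \<Rightarrow> real" where
  "gauss_mixture k mu x =
     (\<Sum>i<k. 1 / (real k * sqrt ((2 * pi) ^ CARD('n))) * exp (- (1/2) * (norm (x - mu i))\<^sup>2))"

definition dist_distribution :: "(real^'n \<Rightarrow> real) \<Rightarrow> real measure" where
  "dist_distribution rho =
     distr (density lborel (\<lambda>x. ennreal (rho x)) \<Otimes>\<^sub>M density lborel (\<lambda>x. ennreal (rho x)))
           borel (\<lambda>(x1, x2). (norm (x1 - x2))\<^sup>2)"

end

theory Submission
  imports Defs
begin

text \<open>Evaluated at \<open>t \<ge> 0\<close>, the Laplace transform of the distribution of distances of a mixture
  is a positive multiple of \<open>\<Sum>i j. exp (- s * dist (\<mu> i) (\<mu> j)\<^sup>2)\<close> with \<open>s = t / (1 + 4 * t)\<close>,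
  because the Gaussian integrals involved factor over the coordinates. As \<open>t\<close> runs through
  \<open>[0, \<infinity>)\<close>, \<open>s\<close> covers \<open>(0, 1/4)\<close>, and exponentials with distinct rates are linearly
  independent on an interval; so equal distributions of distances force equal multisets of
  pairwise distances of the means. Reconstructibility then yields a rigid motion and a permutation
  matching the means, and the rigid motion carries one mixture onto the other.\<close>

lemma nn_integral_exp_quadratic:
  fixes \<alpha> \<beta> \<gamma> :: real
  assumes "0 < \<alpha>"
  shows "(\<integral>\<^sup>+v. ennreal (exp (- \<alpha> * v\<^sup>2 + \<beta> * v + \<gamma>)) \<partial>lborel)
       = ennreal (sqrt (pi / \<alpha>) * exp (\<beta>\<^sup>2 / (4 * \<alpha>) + \<gamma>))"
proof -
  define \<sigma> where "\<sigma> = sqrt (1 / (2 * \<alpha>))"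
  define m where "m = \<beta> / (2 * \<alpha>)"
  define C where "C = sqrt (pi / \<alpha>) * exp (\<beta>\<^sup>2 / (4 * \<alpha>) + \<gamma>)"
  have \<sigma>2: "\<sigma>\<^sup>2 = 1 / (2 * \<alpha>)"
    using assms by (simp add: \<sigma>_def)
  have "exp (- \<alpha> * v\<^sup>2 + \<beta> * v + \<gamma>) = C * normal_density m \<sigma> v" for v
  proof -
    have square: "- \<alpha> * v\<^sup>2 + \<beta> * v + \<gamma> = (\<beta>\<^sup>2 / (4 * \<alpha>) + \<gamma>) + (- (v - m)\<^sup>2 / (2 * \<sigma>\<^sup>2))"
      using assms unfolding \<sigma>2 m_def by (simp add: field_simps power2_eq_square)
    have "sqrt (2 * pi * \<sigma>\<^sup>2) = sqrt (pi / \<alpha>)"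
      using \<sigma>2 by simp
    then show ?thesis
      using assms unfolding normal_density_def C_def square exp_add by simp
  qed
  moreover have "0 \<le> C"
    using assms by (simp add: C_def)
  ultimately have "(\<integral>\<^sup>+v. ennreal (exp (- \<alpha> * v\<^sup>2 + \<beta> * v + \<gamma>)) \<partial>lborel)
      = (\<integral>\<^sup>+v. ennreal C * ennreal (normal_density m \<sigma> v) \<partial>lborel)"
    by (simp add: ennreal_mult)
  also have "\<dots> = ennreal C * (\<integral>\<^sup>+v. ennreal (normal_density m \<sigma> v) \<partial>lborel)"
    by (rule nn_integral_cmult) simp
  also have "(\<integral>\<^sup>+v. ennreal (normal_density m \<sigma> v) \<partial>lborel) = 1"
    using assms by (subst nn_integral_eq_integral) (auto simp: \<sigma>_def)
  finally show ?thesis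
    by (simp add: C_def)
qed

lemma nn_integral_gaussian_pair_real:
  fixes a b t :: real
  assumes t: "0 \<le> t"
  shows "(\<integral>\<^sup>+u. \<integral>\<^sup>+v. ennreal (exp (- ((u - a)\<^sup>2 + (v - b)\<^sup>2) / 2 - t * (u - v)\<^sup>2)) \<partial>lborel \<partial>lborel)
       = ennreal (2 * pi / sqrt (1 + 4 * t) * exp (- t / (1 + 4 * t) * (a - b)\<^sup>2))"
proof -
  define \<alpha> where "\<alpha> = (1 + 4 * t) / (2 + 4 * t)"
  define \<beta> where "\<beta> = (4 * t * b + (2 + 4 * t) * a) / (2 + 4 * t)"
  define \<gamma> where "\<gamma> = (b\<^sup>2 - (1 + 2 * t) * (a\<^sup>2 + b\<^sup>2)) / (2 + 4 * t)"
  have \<alpha>: "0 < \<alpha>"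
    using t by (simp add: \<alpha>_def)
  have nonzero: "1 + 2 * t \<noteq> 0" "2 + 4 * t \<noteq> 0" "1 + 4 * t \<noteq> 0"
    using t by simp_all
  have inner: "(\<integral>\<^sup>+v. ennreal (exp (- ((u - a)\<^sup>2 + (v - b)\<^sup>2) / 2 - t * (u - v)\<^sup>2)) \<partial>lborel)
      = ennreal (sqrt (pi / ((1 + 2 * t) / 2)) * exp (- \<alpha> * u\<^sup>2 + \<beta> * u + \<gamma>))" for u
  proof -
    have "(\<integral>\<^sup>+v. ennreal (exp (- ((u - a)\<^sup>2 + (v - b)\<^sup>2) / 2 - t * (u - v)\<^sup>2)) \<partial>lborel)
        = (\<integral>\<^sup>+v. ennreal (exp (- ((1 + 2 * t) / 2) * v\<^sup>2 + (b + 2 * t * u) * v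
                                + (- ((u - a)\<^sup>2 + b\<^sup>2) / 2 - t * u\<^sup>2))) \<partial>lborel)"
      by (intro nn_integral_cong) (simp add: power2_eq_square field_simps)
    also have "\<dots> = ennreal (sqrt (pi / ((1 + 2 * t) / 2))
        * exp ((b + 2 * t * u)\<^sup>2 / (4 * ((1 + 2 * t) / 2)) + (- ((u - a)\<^sup>2 + b\<^sup>2) / 2 - t * u\<^sup>2)))"
      using t by (intro nn_integral_exp_quadratic) simp
    also have "(b + 2 * t * u)\<^sup>2 / (4 * ((1 + 2 * t) / 2)) + (- ((u - a)\<^sup>2 + b\<^sup>2) / 2 - t * u\<^sup>2)
        = - \<alpha> * u\<^sup>2 + \<beta> * u + \<gamma>"
      using nonzero unfolding \<alpha>_def \<beta>_def \<gamma>_def by (simp add: divide_simps) algebra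
    finally show ?thesis .
  qed
  have exponent: "\<beta>\<^sup>2 / (4 * \<alpha>) + \<gamma> = - t / (1 + 4 * t) * (a - b)\<^sup>2"
    using nonzero unfolding \<alpha>_def \<beta>_def \<gamma>_def by (simp add: divide_simps) algebra
  have factor: "sqrt (pi / ((1 + 2 * t) / 2)) * sqrt (pi / \<alpha>) = 2 * pi / sqrt (1 + 4 * t)"
  proof -
    have "sqrt (pi / ((1 + 2 * t) / 2)) * sqrt (pi / \<alpha>) = sqrt (pi / ((1 + 2 * t) / 2) * (pi / \<alpha>))"
      by (rule real_sqrt_mult[symmetric])
    also have "pi / ((1 + 2 * t) / 2) * (pi / \<alpha>) = (2 * pi)\<^sup>2 / (1 + 4 * t)"
      using nonzero unfolding \<alpha>_def by (simp add: divide_simps) algebra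
    also have "sqrt ((2 * pi)\<^sup>2 / (1 + 4 * t)) = 2 * pi / sqrt (1 + 4 * t)"
      by (simp only: real_sqrt_divide real_sqrt_abs) simp
    finally show ?thesis .
  qed
  have "(\<integral>\<^sup>+u. \<integral>\<^sup>+v. ennreal (exp (- ((u - a)\<^sup>2 + (v - b)\<^sup>2) / 2 - t * (u - v)\<^sup>2)) \<partial>lborel \<partial>lborel)
      = ennreal (sqrt (pi / ((1 + 2 * t) / 2)))
        * (\<integral>\<^sup>+u. ennreal (exp (- \<alpha> * u\<^sup>2 + \<beta> * u + \<gamma>)) \<partial>lborel)"
    unfolding inner using t by (simp add: ennreal_mult' nn_integral_cmult)
  also have "\<dots> = ennreal (sqrt (pi / ((1 + 2 * t) / 2)) * sqrt (pi / \<alpha>) * exp (\<beta>\<^sup>2 / (4 * \<alpha>) + \<gamma>))"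
    using t by (subst nn_integral_exp_quadratic[OF \<alpha>]) (simp add: ennreal_mult' mult.assoc)
  finally show ?thesis
    unfolding exponent factor .
qed

lemma nn_integral_gaussian_pair:
  fixes a b :: "'a::euclidean_space" and t :: real
  assumes t: "0 \<le> t"
  shows "(\<integral>\<^sup>+x. \<integral>\<^sup>+y.
            ennreal (exp (- ((norm (x - a))\<^sup>2 + (norm (y - b))\<^sup>2) / 2 - t * (norm (x - y))\<^sup>2))
            \<partial>lborel \<partial>lborel)
       = ennreal ((2 * pi / sqrt (1 + 4 * t)) ^ DIM('a)
                  * exp (- t / (1 + 4 * t) * (norm (a - b))\<^sup>2))"
proof -
  define f where "f i u v = ennreal (exp (- ((u - a \<bullet> i)\<^sup>2 + (v - b \<bullet> i)\<^sup>2) / 2 - t * (u - v)\<^sup>2))"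
    for i u v
  define K where "K = 2 * pi / sqrt (1 + 4 * t)"
  define s where "s = t / (1 + 4 * t)"
  have [measurable]: "(\<lambda>(u, v). f i u v) \<in> borel_measurable (lborel \<Otimes>\<^sub>M lborel)"
      "f i u \<in> borel_measurable borel"
    for i u
    unfolding f_def by measurable
  have norm_sq: "(norm z)\<^sup>2 = (\<Sum>i\<in>Basis. (z \<bullet> i)\<^sup>2)" for z :: 'a
    unfolding power2_norm_eq_inner by (subst euclidean_inner) (simp add: power2_eq_square)
  have factorize:
      "ennreal (exp (- ((norm (x - a))\<^sup>2 + (norm (y - b))\<^sup>2) / 2 - t * (norm (x - y))\<^sup>2))
      = (\<Prod>i\<in>Basis. f i (x \<bullet> i) (y \<bullet> i))" for x y
  proof -
    have "- ((norm (x - a))\<^sup>2 + (norm (y - b))\<^sup>2) / 2 - t * (norm (x - y))\<^sup>2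
        = (\<Sum>i\<in>Basis. - ((x \<bullet> i - a \<bullet> i)\<^sup>2 + (y \<bullet> i - b \<bullet> i)\<^sup>2) / 2 - t * (x \<bullet> i - y \<bullet> i)\<^sup>2)"
      by (simp add: norm_sq inner_diff_left sum.distrib sum_subtractf sum_negf sum_distrib_left
          flip: sum_divide_distrib)
    then show ?thesis
      unfolding f_def by (simp add: exp_sum prod_ennreal)
  qed
  have "(\<integral>\<^sup>+x. \<integral>\<^sup>+y. ennreal (exp (- ((norm (x - a))\<^sup>2 + (norm (y - b))\<^sup>2) / 2 - t * (norm (x - y))\<^sup>2))
            \<partial>lborel \<partial>lborel)
      = (\<integral>\<^sup>+x. (\<Prod>i\<in>Basis. \<integral>\<^sup>+v. f i (x \<bullet> i) v \<partial>lborel) \<partial>lborel)"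
    unfolding factorize by (subst nn_integral_lborel_prod) simp_all
  also have "\<dots> = (\<Prod>i\<in>Basis. \<integral>\<^sup>+u. \<integral>\<^sup>+v. f i u v \<partial>lborel \<partial>lborel)"
    by (rule nn_integral_lborel_prod) simp_all
  also have "\<dots> = (\<Prod>i\<in>Basis. ennreal (K * exp (- s * (a \<bullet> i - b \<bullet> i)\<^sup>2)))"
    unfolding f_def K_def s_def using nn_integral_gaussian_pair_real[OF t] by simp
  also have "\<dots> = ennreal (\<Prod>i\<in>Basis. K * exp (- s * (a \<bullet> i - b \<bullet> i)\<^sup>2))"
    using t by (intro prod_ennreal) (simp add: K_def)
  also have "(\<Prod>i\<in>Basis. K * exp (- s * (a \<bullet> i - b \<bullet> i)\<^sup>2))
      = K ^ DIM('a) * exp (- s * (norm (a - b))\<^sup>2)"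
    by (simp only: prod.distrib prod_constant exp_sum[OF finite_Basis] norm_sq inner_diff_left
        sum_distrib_left)
  finally show ?thesis
    by (simp add: K_def s_def)
qed

lemma nn_integral_dist_distribution:
  fixes \<rho> :: "real^'n \<Rightarrow> real" and f :: "real \<Rightarrow> ennreal"
  assumes [measurable]: "\<rho> \<in> borel_measurable borel" "f \<in> borel_measurable borel"
  shows "(\<integral>\<^sup>+\<Delta>. f \<Delta> \<partial>dist_distribution \<rho>)
       = (\<integral>\<^sup>+x. \<integral>\<^sup>+y. ennreal (\<rho> x) * ennreal (\<rho> y) * f ((norm (x - y))\<^sup>2) \<partial>lborel \<partial>lborel)"
proof -
  let ?M = "density lborel (\<lambda>x. ennreal (\<rho> x))"
  have "sigma_finite_measure ?M"
    by (subst sigma_finite_measure.sigma_finite_iff_density_finite[OF sigma_finite_lborel]) auto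
  then interpret M: sigma_finite_measure ?M .
  have "(\<integral>\<^sup>+\<Delta>. f \<Delta> \<partial>dist_distribution \<rho>) = (\<integral>\<^sup>+z. f ((norm (fst z - snd z))\<^sup>2) \<partial>(?M \<Otimes>\<^sub>M ?M))"
    unfolding dist_distribution_def by (subst nn_integral_distr) (auto simp: case_prod_beta)
  also have "\<dots> = (\<integral>\<^sup>+x. \<integral>\<^sup>+y. f ((norm (x - y))\<^sup>2) \<partial>?M \<partial>?M)"
    by (subst M.nn_integral_fst[symmetric]) simp_all
  also have "\<dots> = (\<integral>\<^sup>+x. ennreal (\<rho> x)
                      * (\<integral>\<^sup>+y. ennreal (\<rho> y) * f ((norm (x - y))\<^sup>2) \<partial>lborel) \<partial>lborel)"
    by (simp add: nn_integral_density)
  also have "\<dots> = (\<integral>\<^sup>+x. \<integral>\<^sup>+y. ennreal (\<rho> x) * ennreal (\<rho> y) * f ((norm (x - y))\<^sup>2) \<partial>lborel \<partial>lborel)"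
    by (intro nn_integral_cong) (simp add: nn_integral_cmult[symmetric] mult.assoc)
  finally show ?thesis .
qed

lemma nn_integral_dist_distribution_gauss_mixture:
  fixes p :: "nat \<Rightarrow> real^'n" and t :: real
  assumes t: "0 \<le> t"
  shows "(\<integral>\<^sup>+\<Delta>. ennreal (exp (- t * \<Delta>)) \<partial>dist_distribution (gauss_mixture k p))
       = ennreal ((\<Sum>i<k. \<Sum>j<k. exp (- t / (1 + 4 * t) * (dist (p i) (p j))\<^sup>2))
                  / ((real k)\<^sup>2 * sqrt (1 + 4 * t) ^ CARD('n)))"
proof -
  define c where "c = 1 / (real k * sqrt ((2 * pi) ^ CARD('n)))"
  define K where "K = 2 * pi / sqrt (1 + 4 * t)"
  define \<phi> where
    "\<phi> x y i j = exp (- ((norm (x - p i))\<^sup>2 + (norm (y - p j))\<^sup>2) / 2 - t * (norm (x - y))\<^sup>2)"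
    for x y :: "real^'n" and i j
  have c: "0 \<le> c"
    by (simp add: c_def)
  have expand: "ennreal (gauss_mixture k p x) * ennreal (gauss_mixture k p y)
                  * ennreal (exp (- t * (norm (x - y))\<^sup>2))
      = (\<Sum>i<k. \<Sum>j<k. ennreal (c\<^sup>2) * ennreal (\<phi> x y i j))" for x y
  proof -
    have mixture: "gauss_mixture k p z = c * (\<Sum>i<k. exp (- (norm (z - p i))\<^sup>2 / 2))" for z
      by (simp add: gauss_mixture_def c_def sum_distrib_left)
    have exp_split: "exp (- (A + B) / 2 - t * C) = exp (- A / 2) * exp (- B / 2) * exp (- t * C)"
      for A B C :: real
    proof -
      have "- (A + B) / 2 - t * C = - A / 2 + - B / 2 + - t * C"
        by (simp add: field_simps)
      then show ?thesis
        by (simp only: exp_add)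
    qed
    have "gauss_mixture k p x * gauss_mixture k p y * exp (- t * (norm (x - y))\<^sup>2)
        = (\<Sum>i<k. \<Sum>j<k. c\<^sup>2 * \<phi> x y i j)"
      unfolding mixture \<phi>_def exp_split
      by (subst sum.swap) (simp add: sum_product sum_distrib_left power2_eq_square mult_ac)
    moreover have "0 \<le> gauss_mixture k p z" for z
      unfolding gauss_mixture_def by (intro sum_nonneg) simp
    ultimately show ?thesis
      using c by (simp add: ennreal_mult[symmetric] sum_ennreal sum_nonneg \<phi>_def)
  qed
  have "(\<integral>\<^sup>+\<Delta>. ennreal (exp (- t * \<Delta>)) \<partial>dist_distribution (gauss_mixture k p))
      = (\<Sum>i<k. \<Sum>j<k. ennreal (c\<^sup>2) * (\<integral>\<^sup>+x. \<integral>\<^sup>+y. ennreal (\<phi> x y i j) \<partial>lborel \<partial>lborel))"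
  proof -
    have [measurable]: "gauss_mixture k p \<in> borel_measurable borel"
      unfolding gauss_mixture_def by measurable
    have "(\<integral>\<^sup>+\<Delta>. ennreal (exp (- t * \<Delta>)) \<partial>dist_distribution (gauss_mixture k p))
        = (\<integral>\<^sup>+x. \<integral>\<^sup>+y. (\<Sum>i<k. \<Sum>j<k. ennreal (c\<^sup>2) * ennreal (\<phi> x y i j)) \<partial>lborel \<partial>lborel)"
      unfolding expand[symmetric] by (rule nn_integral_dist_distribution) simp_all
    then show ?thesis
      by (simp add: \<phi>_def nn_integral_sum nn_integral_cmult)
  qed
  also have "\<dots> = (\<Sum>i<k. \<Sum>j<k.
                      ennreal (c\<^sup>2 * K ^ CARD('n) * exp (- t / (1 + 4 * t) * (dist (p i) (p j))\<^sup>2)))"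
    unfolding \<phi>_def nn_integral_gaussian_pair[OF t] K_def using t
    by (simp add: dist_norm ennreal_mult[symmetric] mult.assoc)
  also have "\<dots> = ennreal (c\<^sup>2 * K ^ CARD('n)
                              * (\<Sum>i<k. \<Sum>j<k. exp (- t / (1 + 4 * t) * (dist (p i) (p j))\<^sup>2)))"
    using t by (simp add: K_def sum_ennreal sum_nonneg sum_distrib_left)
  also have "c\<^sup>2 * K ^ CARD('n) = 1 / ((real k)\<^sup>2 * sqrt (1 + 4 * t) ^ CARD('n))"
    by (simp add: c_def K_def power_mult_distrib power_divide real_sqrt_pow2 divide_simps)
  finally show ?thesis
    by simp
qed

lemma sum_all_dists_eq_pair_dists:
  fixes p :: "nat \<Rightarrow> real^'n" and h :: "real \<Rightarrow> real"
  shows "(\<Sum>i<k. \<Sum>j<k. h (dist (p i) (p j))) = real k * h 0 + 2 * (\<Sum>d\<in>#pair_dists k p. h d)"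
proof -
  define g where "g = (\<lambda>(i, j). h (dist (p i) (p j)))"
  define P where "P = {(i, j). i < j \<and> j < k}"
  have "finite P"
    by (rule finite_subset[of _ "{..<k} \<times> {..<k}"]) (auto simp: P_def)
  have pairs: "{..<k} \<times> {..<k} = ((\<lambda>i. (i, i)) ` {..<k} \<union> P) \<union> prod.swap ` P"
    by (auto simp: P_def)
  have "(\<Sum>i<k. \<Sum>j<k. h (dist (p i) (p j))) = sum g ({..<k} \<times> {..<k})"
    by (simp add: sum.cartesian_product g_def)
  also have "\<dots> = sum g ((\<lambda>i. (i, i)) ` {..<k} \<union> P) + sum g (prod.swap ` P)"
    unfolding pairs using \<open>finite P\<close> by (intro sum.union_disjoint) (auto simp: P_def)
  also have "sum g ((\<lambda>i. (i, i)) ` {..<k} \<union> P) = sum g ((\<lambda>i. (i, i)) ` {..<k}) + sum g P"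
    using \<open>finite P\<close> by (intro sum.union_disjoint) (auto simp: P_def)
  also have "sum g ((\<lambda>i. (i, i)) ` {..<k}) = real k * h 0"
    by (subst sum.reindex) (auto simp: inj_on_def g_def)
  also have "sum g (prod.swap ` P) = sum g P"
    by (subst sum.reindex) (auto simp: g_def dist_commute intro: sum.cong)
  also have "sum g P = (\<Sum>d\<in>#pair_dists k p. h d)"
    unfolding pair_dists_def sum_unfold_sum_mset image_mset.compositionality
    by (simp add: g_def P_def comp_def case_prod_beta')
  finally show ?thesis
    by simp
qed

lemma exp_sum_eq_0_imp_coeffs_eq_0:
  fixes c e :: "'a \<Rightarrow> real" and a b :: real
  assumes "finite S" "inj_on e S" "a < b"
    and "\<And>s. s \<in> {a<..<b} \<Longrightarrow> (\<Sum>x\<in>S. c x * exp (- s * e x)) = 0"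
  shows "\<forall>x\<in>S. c x = 0"
  using assms
proof (induction S arbitrary: c rule: finite_induct)
  case empty
  then show ?case
    by simp
next
  case (insert x0 S)
  define g where "g s = (\<Sum>x\<in>S. c x * exp (s * (e x0 - e x)))" for s
  have vanish: "c x0 * exp (- s * e x0) + (\<Sum>x\<in>S. c x * exp (- s * e x)) = 0" if "s \<in> {a<..<b}" for s
    using insert.prems(3)[OF that] insert.hyps by simp
  \<comment> \<open>Multiplying by \<open>exp (s * e x0)\<close> makes the \<open>x0\<close>-term constant, so its derivative
    is a sum over \<open>S\<close> alone, with coefficients \<open>c x * (e x0 - e x)\<close>.\<close>
  have g_const: "g s = - c x0" if "s \<in> {a<..<b}" for s
  proof -
    have "exp (s * e x0) * (c x0 * exp (- s * e x0) + (\<Sum>x\<in>S. c x * exp (- s * e x))) = c x0 + g s"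
      unfolding g_def by (simp add: sum_distrib_left algebra_simps exp_add[symmetric] exp_diff)
    then show ?thesis
      using vanish[OF that] by simp
  qed
  have "(\<Sum>x\<in>S. c x * (e x0 - e x) * exp (- s * e x)) = 0" if s: "s \<in> {a<..<b}" for s
  proof -
    have "(g has_real_derivative (\<Sum>x\<in>S. c x * (exp (s * (e x0 - e x)) * (e x0 - e x)))) (at s)"
      unfolding g_def by (auto intro!: derivative_eq_intros sum.cong simp: algebra_simps)
    moreover have "(g has_real_derivative 0) (at s)"
      by (rule has_field_derivative_transform_within_open[OF DERIV_const, where S="{a<..<b}"])
        (use s g_const in auto)
    ultimately have "(\<Sum>x\<in>S. c x * (exp (s * (e x0 - e x)) * (e x0 - e x))) = 0"
      by (rule DERIV_unique)
    then have "exp (- s * e x0) * (\<Sum>x\<in>S. c x * (exp (s * (e x0 - e x)) * (e x0 - e x))) = 0"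
      by simp
    then show ?thesis
      unfolding sum_distrib_left by (simp add: algebra_simps exp_add[symmetric])
  qed
  moreover have "inj_on e S"
    using insert.prems(1) by (simp add: inj_on_insert)
  ultimately have "\<forall>x\<in>S. c x * (e x0 - e x) = 0"
    using insert.IH[of "\<lambda>x. c x * (e x0 - e x)"] insert.prems(2) by blast
  moreover have "e x0 \<noteq> e x" if "x \<in> S" for x
    using insert.prems(1) insert.hyps(2) that by (auto simp: inj_on_def)
  ultimately have "\<forall>x\<in>S. c x = 0"
    by auto
  moreover have "(a + b) / 2 \<in> {a<..<b}"
    using insert.prems(2) by simp
  ultimately show ?case
    using vanish by fastforce
qed

lemma sum_mset_eq_sum_count:
  fixes h :: "'a \<Rightarrow> 'b::comm_semiring_1"
  assumes "finite S" "set_mset A \<subseteq> S"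
  shows "(\<Sum>x\<in>#A. h x) = (\<Sum>x\<in>S. of_nat (count A x) * h x)"
  using assms(2)
proof (induction A)
  case empty
  then show ?case
    by simp
next
  case (add y A)
  have "(\<Sum>x\<in>S. of_nat (count (add_mset y A) x) * h x)
      = (\<Sum>x\<in>S. of_nat (count A x) * h x + (if x = y then h x else 0))"
    by (intro sum.cong refl) (auto simp: algebra_simps)
  also have "\<dots> = (\<Sum>x\<in>S. of_nat (count A x) * h x) + h y"
    using assms(1) add.prems by (simp add: sum.distrib)
  finally show ?case
    using add by (simp add: add.commute)
qed

lemma multiset_eqI_exp_sums:
  fixes A B :: "'a multiset" and e :: "'a \<Rightarrow> real" and a b :: real
  assumes "a < b" "inj_on e (set_mset A \<union> set_mset B)"
    and "\<And>s. s \<in> {a<..<b} \<Longrightarrow> (\<Sum>x\<in>#A. exp (- s * e x)) = (\<Sum>x\<in>#B. exp (- s * e x))"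
  shows "A = B"
proof -
  define S where "S = set_mset A \<union> set_mset B"
  have "\<forall>x\<in>S. real (count A x) - real (count B x) = 0"
  proof (rule exp_sum_eq_0_imp_coeffs_eq_0[where e = e])
    fix s :: real
    assume s: "s \<in> {a<..<b}"
    have "(\<Sum>x\<in>S. (real (count A x) - real (count B x)) * exp (- s * e x))
        = (\<Sum>x\<in>#A. exp (- s * e x)) - (\<Sum>x\<in>#B. exp (- s * e x))"
      using sum_mset_eq_sum_count[of S A "\<lambda>x. exp (- s * e x)"]
        sum_mset_eq_sum_count[of S B "\<lambda>x. exp (- s * e x)"]
      by (simp add: S_def left_diff_distrib sum_subtractf)
    then show "(\<Sum>x\<in>S. (real (count A x) - real (count B x)) * exp (- s * e x)) = 0"
      using assms(3)[OF s] by simp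
  qed (use assms in \<open>simp_all add: S_def\<close>)
  then have "count A x = count B x" for x
    by (cases "x \<in> S") (auto simp: S_def not_in_iff)
  then show ?thesis
    by (rule multiset_eqI)
qed

lemma pair_dists_eq_if_dist_distribution_eq:
  fixes mu nu :: "nat \<Rightarrow> real^'n"
  assumes k: "0 < k"
    and eq: "dist_distribution (gauss_mixture k nu) = dist_distribution (gauss_mixture k mu)"
  shows "pair_dists k nu = pair_dists k mu"
proof (rule multiset_eqI_exp_sums[where e = "\<lambda>d. d\<^sup>2" and a = 0 and b = "1/4"])
  show "inj_on (\<lambda>d. d\<^sup>2) (set_mset (pair_dists k nu) \<union> set_mset (pair_dists k mu))"
    by (auto simp: inj_on_def pair_dists_def power2_eq_iff_nonneg)
  fix s :: real
  assume s: "s \<in> {0<..<1/4}"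
  define t where "t = s / (1 - 4 * s)"
  have t: "0 \<le> t" and rate: "- t / (1 + 4 * t) = - s"
    using s by (auto simp: t_def field_simps)
  define D where "D = (real k)\<^sup>2 * sqrt (1 + 4 * t) ^ CARD('n)"
  have D: "0 < D"
    using k t by (simp add: D_def)
  define G where "G p = (\<Sum>i<k. \<Sum>j<k. exp (- s * (dist (p i) (p j))\<^sup>2))" for p :: "nat \<Rightarrow> real^'n"
  have "ennreal (G nu / D) = ennreal (G mu / D)"
    using nn_integral_dist_distribution_gauss_mixture[OF t, of k nu]
      nn_integral_dist_distribution_gauss_mixture[OF t, of k mu]
    unfolding eq rate G_def D_def by simp
  moreover have "0 \<le> G p" for p
    unfolding G_def by (intro sum_nonneg) simp
  ultimately have "G nu = G mu"
    using D by simp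
  then show "(\<Sum>d\<in>#pair_dists k nu. exp (- s * d\<^sup>2)) = (\<Sum>d\<in>#pair_dists k mu. exp (- s * d\<^sup>2))"
    using sum_all_dists_eq_pair_dists[where h = "\<lambda>d. exp (- s * d\<^sup>2)" and p = nu]
      sum_all_dists_eq_pair_dists[where h = "\<lambda>d. exp (- s * d\<^sup>2)" and p = mu]
    unfolding G_def by simp
qed simp

lemma rigid_motion_dist:
  assumes "rigid_motion g"
  shows "dist (g x) (g y) = dist x y"
proof -
  obtain A b where A: "orthogonal_transformation A" and g: "\<And>x. g x = A x + b"
    using assms unfolding rigid_motion_def by blast
  have "g x - g y = A (x - y)"
    using A by (simp add: g orthogonal_transformation_linear linear_diff)
  then show ?thesis
    using A by (simp add: dist_norm orthogonal_transformation_norm)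
qed

lemma gauss_mixture_rigid_motion:
  fixes mu nu :: "nat \<Rightarrow> real^'n"
  assumes "rigid_motion g" "\<pi> permutes {..<k}" "\<And>i. i < k \<Longrightarrow> g (mu (\<pi> i)) = nu i"
  shows "gauss_mixture k mu x = gauss_mixture k nu (g x)"
proof -
  define f where
    "f i = 1 / (real k * sqrt ((2 * pi) ^ CARD('n))) * exp (- (1/2) * (dist x (mu i))\<^sup>2)" for i
  have "gauss_mixture k nu (g x) = (\<Sum>i<k. f (\<pi> i))"
    unfolding gauss_mixture_def f_def
    by (intro sum.cong refl)
      (simp add: assms(3)[symmetric] rigid_motion_dist[OF assms(1)] dist_norm[symmetric])
  also have "\<dots> = (\<Sum>i<k. f i)"
    using sum.permute[OF assms(2), of f] by simp
  finally show ?thesis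
    by (simp add: gauss_mixture_def f_def dist_norm)
qed

theorem theorem3p1:
  fixes k :: nat and mu nu :: "nat \<Rightarrow> real^'n"
  assumes "k \<ge> CARD('n) + 2"
    and "reconstructible k mu"
    and "dist_distribution (gauss_mixture k nu) = dist_distribution (gauss_mixture k mu)"
  shows "\<exists>g. rigid_motion g \<and> (\<forall>x. gauss_mixture k mu x = gauss_mixture k nu (g x))"
proof -
  have "pair_dists k nu = pair_dists k mu"
    using assms(1,3) by (intro pair_dists_eq_if_dist_distribution_eq) simp_all
  then obtain g \<pi> where "rigid_motion g" "\<pi> permutes {..<k}" "\<forall>i<k. g (mu (\<pi> i)) = nu i"
    using assms(2) unfolding reconstructible_def by blast
  then show ?thesis
    using gauss_mixture_rigid_motion by blast
qed

end
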